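(* In the Setting, it cannot hold simultaneously that $r=\sqrt{K-\lambda_1}$, $r+s=\sqrt{K^2-\lambda_2V}$, $s=-\sqrt{K^2-\lambda_2V}$, $f_2=0$, $f_1=f-c+1$, $g_1=c-1$ and $g_2=g-c$.
   Context: Setting: $\Gamma$ is a primitive strongly regular graph with parameters $(v,k,\lambda,\mu)$ (a $k$-regular graph on $v$ vertices, any two adjacent vertices having $\lambda$ and any two distinct non-adjacent vertices having $\mu$ common neighbours; primitive means $\Gamma$ and its complement are connected), with spectrum $k^1, r^f, s^g$ where $k>r>s$ and exponents are multiplicities. $C$ is a coclique in $\Gamma$ of size $c=\frac{vs}{s-k}$. A $K$-regular graph on $V$ vertices, neither complete nor edgeless, is a divisible design graph with parameters $(V,K,\lambda_1,\lambda_2;m,n)$ if its vertex set can be partitioned into $m$ canonical classes of size $n$ such that two distinct vertices in the same class have exactly $\lambda_1$ common neighbours and two vertices in different classes have exactly $\lambda_2$ common neighbours; it is proper unless $m=1$, $n=1$ or $\lambda_1=\lambda_2$. It is assumed that the subgraph $\Delta$ induced on $V(\Gamma)\setminus C$ is a proper divisible design graph with parameters $(V,K,\lambda_1,\lambda_2;m,n)$. Let $A$ be the adjacency matrix of $\Delta$, $W$ the space of vectors constant on each canonical class and $\mathbf{1}$ the all-ones vector. It is known that $A$ acts on $W^\perp$ with eigenvalues $\pm\sqrt{K-\lambda_1}$, whose multiplicities are denoted $f_1$ (for $+$) and $f_2$ (for $-$), with $f_1+f_2=m(n-1)$, and on $W\cap\mathbf{1}^\perp$ with eigenvalues $\pm\sqrt{K^2-\lambda_2V}$,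 with multiplicities $g_1$ (for $+$) and $g_2$ (for $-$), $g_1+g_2=m-1$. It is also known that the spectrum of $\Delta$ is $(k+s)^1, r^{f-c+1}, (r+s)^{c-1}, s^{g-c}$, with $c<g$. *)

theory Defs
  imports "HOL-Analysis.Analysis" "HOL-Library.Multiset" "HOL-Library.Disjoint_Sets"
begin

definition is_graph :: "('a \<Rightarrow> 'a \<Rightarrow> bool) \<Rightarrow> bool" where
  "is_graph E \<longleftrightarrow> (\<forall>x y. E x y \<longrightarrow> E y x) \<and> (\<forall>x. \<not> E x x)"

definition common_nbrs :: "('a \<Rightarrow> 'a \<Rightarrow> bool) \<Rightarrow> 'a set \<Rightarrow> 'a \<Rightarrow> 'a \<Rightarrow> nat" where
  "common_nbrs E X x y = card {z \<in> X. E x z \<and> E y z}"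

definition srg :: "('a::finite \<Rightarrow> 'a \<Rightarrow> bool) \<Rightarrow> nat \<Rightarrow> nat \<Rightarrow> nat \<Rightarrow> nat \<Rightarrow> bool" where
  "srg E v k lam mu \<longleftrightarrow> is_graph E \<and> CARD('a) = v
     \<and> (\<forall>x. card {y. E x y} = k)
     \<and> (\<forall>x y. x \<noteq> y \<and> E x y \<longrightarrow> common_nbrs E UNIV x y = lam)
     \<and> (\<forall>x y. x \<noteq> y \<and> \<not> E x y \<longrightarrow> common_nbrs E UNIV x y = mu)"

definition primitive :: "('a \<Rightarrow> 'a \<Rightarrow> bool) \<Rightarrow> bool" where
  "primitive E \<longleftrightarrow> (\<forall>x y. E\<^sup>*\<^sup>* x y) \<and> (\<forall>x y. (\<lambda>a b. a \<noteq> b \<and> \<not> E a b)\<^sup>*\<^sup>* x y)"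

definition coclique :: "('a \<Rightarrow> 'a \<Rightarrow> bool) \<Rightarrow> 'a set \<Rightarrow> bool" where
  "coclique E C \<longleftrightarrow> (\<forall>x\<in>C. \<forall>y\<in>C. \<not> E x y)"

definition adj_mat :: "('a::finite \<Rightarrow> 'a \<Rightarrow> bool) \<Rightarrow> 'a set \<Rightarrow> real^'a^'a" where
  "adj_mat E X = (\<chi> i j. if i \<in> X \<and> j \<in> X \<and> E i j then 1 else 0)"

text \<open>Vectors indexed by the vertices of X (i.e. supported on X).\<close>
definition supp_on :: "'a::finite set \<Rightarrow> (real^'a) set" where
  "supp_on X = {x. \<forall>i. i \<notin> X \<longrightarrow> x $ i = 0}"

definition ones_on :: "'a::finite set \<Rightarrow> real^'a" where
  "ones_on X = (\<chi> i. if i \<in> X then 1 else 0)"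

definition orth_compl :: "'a::finite set \<Rightarrow> (real^'a) set \<Rightarrow> (real^'a) set" where
  "orth_compl X S = {x \<in> supp_on X. \<forall>w\<in>S. inner x w = 0}"

definition class_const :: "'a::finite set \<Rightarrow> 'a set set \<Rightarrow> (real^'a) set" where
  "class_const X P = {x \<in> supp_on X. \<forall>Q\<in>P. \<forall>i\<in>Q. \<forall>j\<in>Q. x $ i = x $ j}"

definition eigensp :: "(real^'a::finite) set \<Rightarrow> real^'a^'a \<Rightarrow> real \<Rightarrow> (real^'a) set" where
  "eigensp S M \<theta> = {x \<in> S. M *v x = \<theta> *\<^sub>R x}"

definition spectrum_on :: "(real^'a::finite) set \<Rightarrow> real^'a^'a \<Rightarrow> real multiset \<Rightarrow> bool" where
  "spectrum_on S M Ms \<longleftrightarrow> (\<forall>\<theta>. dim (eigensp S M \<theta>) = count Ms \<theta>)"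

definition ddg :: "('a \<Rightarrow> 'a \<Rightarrow> bool) \<Rightarrow> 'a set \<Rightarrow> 'a set set
    \<Rightarrow> nat \<Rightarrow> nat \<Rightarrow> nat \<Rightarrow> nat \<Rightarrow> nat \<Rightarrow> nat \<Rightarrow> bool" where
  "ddg E X P VV K l1 l2 m n \<longleftrightarrow>
     card X = VV
     \<and> (\<forall>x\<in>X. card {y \<in> X. E x y} = K)
     \<and> \<not> (\<forall>x\<in>X. \<forall>y\<in>X. x \<noteq> y \<longrightarrow> E x y)
     \<and> \<not> (\<forall>x\<in>X. \<forall>y\<in>X. \<not> E x y)
     \<and> partition_on X P \<and> card P = m \<and> (\<forall>Q\<in>P. card Q = n)
     \<and> (\<forall>Q\<in>P. \<forall>x\<in>Q. \<forall>y\<in>Q. x \<noteq> y \<longrightarrow> common_nbrs E X x y = l1)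
     \<and> (\<forall>Q\<in>P. \<forall>Q'\<in>P. Q \<noteq> Q' \<longrightarrow> (\<forall>x\<in>Q. \<forall>y\<in>Q'. common_nbrs E X x y = l2))"

definition proper_ddg :: "('a \<Rightarrow> 'a \<Rightarrow> bool) \<Rightarrow> 'a set \<Rightarrow> 'a set set
    \<Rightarrow> nat \<Rightarrow> nat \<Rightarrow> nat \<Rightarrow> nat \<Rightarrow> nat \<Rightarrow> nat \<Rightarrow> bool" where
  "proper_ddg E X P VV K l1 l2 m n \<longleftrightarrow>
     ddg E X P VV K l1 l2 m n \<and> m \<noteq> 1 \<and> n \<noteq> 1 \<and> l1 \<noteq> l2"

end

theory Submission
  imports Defs
begin

text \<open>Under the stated equalities the eigenvalue \<open>-sqrt (K - \<lambda>\<^sub>1)\<close> does not occur on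
  \<open>W\<^sup>\<perp>\<close>, so \<open>f\<^sub>1 = m (n - 1) \<ge> dim W\<^sup>\<perp>\<close> and the whole of \<open>W\<^sup>\<perp>\<close> is the eigenspace of \<open>r\<close>.
  The equalities also force \<open>r = -2 s > 0\<close>. But for two distinct vertices \<open>i, j\<close> of one
  canonical class, \<open>e\<^sub>i - e\<^sub>j \<in> W\<^sup>\<perp>\<close>, and the \<open>i\<close>-th entry of \<open>A (e\<^sub>i - e\<^sub>j)\<close> is
  \<open>-A\<^sub>i\<^sub>j \<le> 0\<close>, whereas that of \<open>r (e\<^sub>i - e\<^sub>j)\<close> is \<open>r\<close>.\<close>

lemma subspace_supp_on: "subspace (supp_on X)"
  unfolding subspace_def supp_on_def by auto

lemma subspace_class_const: "subspace (class_const X P)"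
  unfolding subspace_def
proof (intro conjI ballI allI)
  show "0 \<in> class_const X P" by (simp add: class_const_def supp_on_def)
next
  fix x y assume x: "x \<in> class_const X P" and y: "y \<in> class_const X P"
  show "x + y \<in> class_const X P"
    unfolding class_const_def supp_on_def mem_Collect_eq
  proof (intro conjI allI ballI impI)
    fix i assume "i \<notin> X"
    then show "(x + y) $ i = 0" using x y by (simp add: class_const_def supp_on_def)
  next
    fix Q i j assume "Q \<in> P" "i \<in> Q" "j \<in> Q"
    then have "x $ i = x $ j" "y $ i = y $ j" using x y unfolding class_const_def by blast+
    then show "(x + y) $ i = (x + y) $ j" by simp
  qed
next
  fix c :: real and x assume x: "x \<in> class_const X P"
  show "c *\<^sub>R x \<in> class_const X P"
    unfolding class_const_def supp_on_def mem_Collect_eq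
  proof (intro conjI allI ballI impI)
    fix i assume "i \<notin> X"
    then show "(c *\<^sub>R x) $ i = 0" using x by (simp add: class_const_def supp_on_def)
  next
    fix Q i j assume "Q \<in> P" "i \<in> Q" "j \<in> Q"
    then have "x $ i = x $ j" using x unfolding class_const_def by blast
    then show "(c *\<^sub>R x) $ i = (c *\<^sub>R x) $ j" by simp
  qed
qed

lemma subspace_orth_compl: "subspace (orth_compl X S)"
  unfolding subspace_def orth_compl_def supp_on_def by (auto simp: inner_add_left)

lemma subspace_eigensp: "subspace S \<Longrightarrow> subspace (eigensp S M \<theta>)"
  unfolding subspace_def eigensp_def
  by (auto simp: matrix_vector_right_distrib scaleR_add_right matrix_vector_mult_scaleR)

lemma eigensp_eq_if_dim_ge:
  assumes "subspace S" and "dim S \<le> dim (eigensp S M \<theta>)"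
  shows "eigensp S M \<theta> = S"
  using assms by (intro subspace_dim_equal subspace_eigensp) (auto simp: eigensp_def)

lemma dim_supp_on_le: "dim (supp_on (X::'a::finite set)) \<le> card X"
proof -
  have "supp_on X \<subseteq> span ((\<lambda>i. axis i (1::real)) ` X)"
  proof
    fix x :: "real^'a" assume x: "x \<in> supp_on X"
    have "x = (\<Sum>i\<in>X. x$i *\<^sub>R axis i 1)"
      using x by (auto simp: vec_eq_iff supp_on_def sum_component axis_def if_distrib cong: if_cong)
    also have "\<dots> \<in> span ((\<lambda>i. axis i (1::real)) ` X)"
      by (intro span_sum span_scale span_base) auto
    finally show "x \<in> span ((\<lambda>i. axis i (1::real)) ` X)" .
  qed
  then have "dim (supp_on X) \<le> card ((\<lambda>i. axis i (1::real)) ` X)"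
    by (intro dim_le_card) auto
  also have "\<dots> \<le> card X" by (rule card_image_le) auto
  finally show ?thesis .
qed

lemma card_le_dim_class_const:
  fixes X :: "'a::finite set"
  assumes part: "partition_on X P"
  shows "card P \<le> dim (class_const X P)"
proof -
  define ind where "ind Q = (\<chi> k. if k \<in> Q then (1::real) else 0)" for Q :: "'a set"
  have disj: "disjoint P" and Pne: "{} \<notin> P" and UP: "\<Union>P = X"
    using part by (auto simp: partition_on_def)
  have "ind ` P \<subseteq> class_const X P"
  proof
    fix x assume "x \<in> ind ` P"
    then obtain Q where Q: "Q \<in> P" "x = ind Q" by auto
    have "Q \<subseteq> X"
      using Q(1) UP by blast
    then show "x \<in> class_const X P"
      unfolding class_const_def supp_on_def
    proof (intro CollectI conjI allI ballI impI)
      fix i assume "i \<notin> X"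
      then show "x $ i = 0" using \<open>Q \<subseteq> X\<close> Q(2) by (auto simp: ind_def)
    next
      fix Q' i j assume "Q' \<in> P" "i \<in> Q'" "j \<in> Q'"
      then have "i \<in> Q \<longleftrightarrow> j \<in> Q"
        using Q(1) by (cases "Q = Q'") (auto dest: disjointD[OF disj])
      then show "x $ i = x $ j" using Q(2) by (simp add: ind_def)
    qed
  qed
  moreover have "independent (ind ` P)"
  proof (rule pairwise_orthogonal_independent)
    show "pairwise orthogonal (ind ` P)"
    proof (clarsimp simp: pairwise_def orthogonal_def)
      fix Q Q' assume "Q \<in> P" "Q' \<in> P" "ind Q \<noteq> ind Q'"
      then have "Q \<inter> Q' = {}" by (metis disjointD[OF disj])
      then show "ind Q \<bullet> ind Q' = 0"
        unfolding inner_vec_def ind_def by (auto intro!: sum.neutral)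
    qed
    show "0 \<notin> ind ` P"
    proof
      assume "0 \<in> ind ` P"
      then obtain Q where Q0: "Q \<in> P" "ind Q = 0" by auto
      then have "Q \<noteq> {}" using Pne by metis
      then obtain q where "q \<in> Q" by blast
      then have "ind Q $ q = 1" by (simp add: ind_def)
      then show False using Q0 by simp
    qed
  qed
  ultimately have "card (ind ` P) \<le> dim (class_const X P)"
    by (rule independent_card_le_dim)
  moreover have "inj_on ind P"
    by (rule inj_onI) (auto simp: ind_def vec_eq_iff split: if_splits)
  ultimately show ?thesis by (simp add: card_image)
qed

lemma dim_orth_compl_class_const:
  fixes X :: "'a::finite set"
  assumes "partition_on X P"
  shows "dim (orth_compl X (class_const X P)) + card P \<le> card X"
proof -
  have "orth_compl X (class_const X P)
          = {y \<in> supp_on X. \<forall>x \<in> class_const X P. orthogonal x y}"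
    unfolding orth_compl_def orthogonal_def by (auto simp: inner_commute)
  moreover have "dim {y \<in> supp_on X. \<forall>x \<in> class_const X P. orthogonal x y}
                   + dim (class_const X P) = dim (supp_on X)"
    by (rule dim_subspace_orthogonal_to_vectors[OF subspace_class_const subspace_supp_on])
       (auto simp: class_const_def)
  ultimately have "dim (orth_compl X (class_const X P)) + dim (class_const X P)
                     = dim (supp_on X)"
    by simp
  then show ?thesis
    using card_le_dim_class_const[OF assms] dim_supp_on_le[of X] by linarith
qed

lemma axis_diff_in_orth_compl_class_const:
  assumes "Q \<in> P" "i \<in> Q" "j \<in> Q" "i \<in> X" "j \<in> X"
  shows "axis i (1::real) - axis j 1 \<in> orth_compl X (class_const X P)"
  unfolding orth_compl_def
proof (intro CollectI conjI ballI)
  show "axis i 1 - axis j 1 \<in> supp_on X"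
    using assms by (auto simp: supp_on_def axis_def)
next
  fix w assume "w \<in> class_const X P"
  then have "w $ i = w $ j"
    using assms unfolding class_const_def by blast
  then show "inner (axis i 1 - axis j 1) w = 0"
    by (simp add: inner_diff_left inner_axis')
qed

lemma adj_mat_axis_diff_nth:
  assumes "is_graph E"
  shows "(adj_mat E X *v (axis i (1::real) - axis j 1)) $ i \<le> 0"
proof -
  have "(adj_mat E X *v (axis i 1 - axis j 1)) $ i = adj_mat E X $ i $ i - adj_mat E X $ i $ j"
    by (simp add: matrix_vector_mult_def axis_def right_diff_distrib sum_subtractf
        if_distrib[of "\<lambda>t. _ * t"] cong: if_cong)
  then show ?thesis
    using assms by (simp add: adj_mat_def is_graph_def)
qed

lemma orth_compl_class_const_eigenvalue_nonpos:
  assumes "is_graph E" and part: "partition_on X P"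
    and "Q \<in> P" "i \<in> Q" "j \<in> Q" "i \<noteq> j"
    and eig: "\<forall>x \<in> orth_compl X (class_const X P). adj_mat E X *v x = \<theta> *\<^sub>R x"
  shows "\<theta> \<le> 0"
proof -
  have "i \<in> X" "j \<in> X"
    using part \<open>Q \<in> P\<close> \<open>i \<in> Q\<close> \<open>j \<in> Q\<close> by (auto simp: partition_on_def)
  then have "adj_mat E X *v (axis i 1 - axis j 1) = \<theta> *\<^sub>R (axis i 1 - axis j 1)"
    using eig assms(3-5) axis_diff_in_orth_compl_class_const by blast
  then have "(adj_mat E X *v (axis i 1 - axis j 1)) $ i = \<theta>"
    using \<open>i \<noteq> j\<close> by (simp add: axis_def)
  then show ?thesis
    using adj_mat_axis_diff_nth[OF \<open>is_graph E\<close>] by metis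
qed

lemma ddg_card_eq:
  fixes X :: "'a::finite set"
  assumes "ddg E X P VV K l1 l2 m n"
  shows "card X = m * n"
proof -
  have "partition_on X P" "card P = m" "\<forall>Q\<in>P. card Q = n"
    using assms by (auto simp: ddg_def)
  then show ?thesis
    by (simp add: product_partition)
qed

lemma proper_ddg_class_pair:
  fixes X :: "'a::finite set"
  assumes "proper_ddg E X P VV K l1 l2 m n"
  obtains Q i j where "Q \<in> P" "i \<in> Q" "j \<in> Q" "i \<noteq> j"
proof -
  have part: "partition_on X P" and cQ: "\<forall>Q\<in>P. card Q = n" and "n \<noteq> 1"
    and "X \<noteq> {}"
    using assms by (auto simp: proper_ddg_def ddg_def)
  then obtain Q where Q: "Q \<in> P" "Q \<noteq> {}"
    by (auto simp: partition_on_def)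
  then have "card Q \<noteq> 0" "card Q \<noteq> 1"
    using cQ \<open>n \<noteq> 1\<close> by auto
  then have "\<not> card Q \<le> Suc 0"
    by linarith
  then obtain i j where "i \<in> Q" "j \<in> Q" "i \<noteq> j"
    by (auto simp: card_le_Suc0_iff_eq)
  with Q that show ?thesis by blast
qed

theorem mainTheorem3:
  fixes E :: "'a::finite \<Rightarrow> 'a \<Rightarrow> bool"
    and v k lam mu f g :: nat and r s :: real
    and C :: "'a set" and P :: "'a set set"
    and VV K l1 l2 m n f1 f2 g1 g2 :: nat
  assumes srg: "srg E v k lam mu"
    and prim: "primitive E"
    and specG: "spectrum_on UNIV (adj_mat E UNIV)
                  ({#real k#} + replicate_mset f r + replicate_mset g s)"
    and kr: "real k > r" and rs: "r > s"
    and cocl: "coclique E C"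
    and csize: "real (card C) = real v * s / (s - real k)"
    and ddg: "proper_ddg E (- C) P VV K l1 l2 m n"
    and specWp: "spectrum_on (orth_compl (- C) (class_const (- C) P)) (adj_mat E (- C))
                  (replicate_mset f1 (sqrt (real K - real l1))
                   + replicate_mset f2 (- sqrt (real K - real l1)))"
    and f12: "f1 + f2 = m * (n - 1)"
    and specW1: "spectrum_on (class_const (- C) P \<inter> orth_compl (- C) {ones_on (- C)})
                  (adj_mat E (- C))
                  (replicate_mset g1 (sqrt (real K ^ 2 - real l2 * real VV))
                   + replicate_mset g2 (- sqrt (real K ^ 2 - real l2 * real VV)))"
    and g12: "g1 + g2 = m - 1"
    and specD: "spectrum_on (supp_on (- C)) (adj_mat E (- C))
                  ({#real k + s#}
                   + replicate_mset (nat (int f - int (card C) + 1)) r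
                   + replicate_mset (card C - 1) (r + s)
                   + replicate_mset (g - card C) s)"
    and cg: "card C < g"
  shows "\<not> (r = sqrt (real K - real l1)
           \<and> r + s = sqrt (real K ^ 2 - real l2 * real VV)
           \<and> s = - sqrt (real K ^ 2 - real l2 * real VV)
           \<and> f2 = 0
           \<and> int f1 = int f - int (card C) + 1
           \<and> int g1 = int (card C) - 1
           \<and> int g2 = int g - int (card C))"
proof (intro notI, elim conjE)
  assume r: "r = sqrt (real K - real l1)"
    and "r + s = sqrt (real K ^ 2 - real l2 * real VV)"
    and "s = - sqrt (real K ^ 2 - real l2 * real VV)"
    and "f2 = 0"
  then have "r > 0"
    using rs by linarith
  define Wp where "Wp = orth_compl (- C) (class_const (- C) P)"
  have part: "partition_on (- C) P" and "card P = m"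
    using ddg by (auto simp: proper_ddg_def ddg_def)
  have "dim (eigensp Wp (adj_mat E (- C)) r) = m * (n - 1)"
    using specWp f12 \<open>f2 = 0\<close> unfolding spectrum_on_def Wp_def r by simp
  moreover have "dim Wp + m \<le> m * n"
    using dim_orth_compl_class_const[OF part] ddg_card_eq \<open>card P = m\<close> ddg
    unfolding Wp_def proper_ddg_def by metis
  ultimately have "eigensp Wp (adj_mat E (- C)) r = Wp"
    by (intro eigensp_eq_if_dim_ge) (auto simp: Wp_def subspace_orth_compl diff_mult_distrib2)
  then have "\<forall>x \<in> Wp. adj_mat E (- C) *v x = r *\<^sub>R x"
    unfolding eigensp_def by blast
  moreover obtain Q i j where "Q \<in> P" "i \<in> Q" "j \<in> Q" "i \<noteq> j"
    using proper_ddg_class_pair[OF ddg] .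
  moreover have "is_graph E"
    using srg by (simp add: srg_def)
  ultimately have "r \<le> 0"
    using orth_compl_class_const_eigenvalue_nonpos part unfolding Wp_def by blast
  with \<open>r > 0\<close> show False by simp
qed

end
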